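(* Let $\kappa=\exp\left(\sum_p\frac{1}{p\log p}\right)$ (sum over all primes). Then $\kappa\leqslant5.5$, and for every real $Y\geqslant20$ and integer $\alpha\geqslant2$, $$\sum_{\substack{d\geqslant Y\\ p\mid d\Rightarrow p^\alpha\mid d}}\frac1d\leqslant\frac{3\kappa^\alpha\log Y}{Y^{1-1/\alpha}},\qquad \sum_{\substack{d\geqslant Y\\ p\mid d\Rightarrow p^\alpha\mid d}}\frac{1}{\varphi(d)}\leqslant\frac{13\kappa^\alpha\log Y\log\log Y}{Y^{1-1/\alpha}},$$ where the sums run over natural numbers $d\geqslant Y$ such that every prime dividing $d$ divides it to exponent at least $\alpha$.
   Context: $\varphi$ is Euler's totient function; $p$ denotes primes. *)

theory Defs
  imports "HOL-Analysis.Analysis" "HOL-Number_Theory.Number_Theory"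
begin

definition kappa :: real where
  "kappa = exp (\<Sum>\<^sub>\<infinity>p\<in>{p::nat. prime p}. 1 / (real p * ln (real p)))"

definition alpha_full :: "nat \<Rightarrow> nat \<Rightarrow> bool" where
  "alpha_full \<alpha> d \<longleftrightarrow> (\<forall>p. prime p \<and> p dvd d \<longrightarrow> p ^ \<alpha> dvd d)"

end

theory Submission
  imports Defs
begin

(*
  kappa <= 5.5: Chebyshev's bound theta(n) <= n ln 4 and the divisibility of n! by p^(n div p)
  give Mertens' estimate sum_{p <= n} ln p / p <= ln n - 1 + ln 4 + (1 + ln n) / n, and partial
  summation turns it into a bound for the tail sum_{p > 256} 1 / (p ln p). The primes up to 256
  are summed with certified lower bounds for ln p, accumulated along the chain of consecutive
  primes from the artanh series of ln (q / p).

  The alpha-full sums follow Rankin's method: for d >= Y and r = (1 + 1 / ln Y) / alpha we have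
  1 / d <= Y^(r - 1) d^(-r), and since all exponents of an alpha-full d are at least alpha, the
  sum of d^(-r) is at most the Euler product prod_p (1 + p^(-1 - 1 / ln Y) (1 + alpha / ln p)).
  Its factors are at most (1 + p^(-1 - 1 / ln Y)) (1 + alpha / (p ln p)); the first product is
  bounded by zeta(1 + 1 / ln Y) <= 1 + ln Y, the second by kappa^alpha, and
  Y^(r - 1) <= 2 / Y^(1 - 1 / alpha). For 1 / phi(d) the extra weight prod_{p | d} p / (p - 1)
  costs one more factor prod_p (1 + 1 / (p (p - 1))) <= e.
*)

section \<open>Chebyshev's and Mertens' estimates\<close>

lemma prod_prime_powers_dvd:
  fixes x :: nat
  assumes "finite P" "\<And>p. p \<in> P \<Longrightarrow> prime p" "\<And>p. p \<in> P \<Longrightarrow> p ^ e p dvd x"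
  shows "(\<Prod>p\<in>P. p ^ e p) dvd x"
  using assms
proof (induction P rule: finite_induct)
  case (insert q P)
  have "coprime (q ^ e q) (\<Prod>p\<in>P. p ^ e p)"
  proof (rule prod_coprime_right)
    fix p assume "p \<in> P"
    then have "coprime q p"
      using insert by (intro primes_coprime) auto
    then show "coprime (q ^ e q) (p ^ e p)" by simp
  qed
  then show ?case using insert by (simp add: divides_mult)
qed simp

lemma odd_central_binomial_le: "(2*m+1 choose m) \<le> 4 ^ m"
proof -
  have "(2*m+1 choose m) + (2*m+1 choose (m+1)) \<le> (\<Sum>k\<le>2*m+1. (2*m+1) choose k)"
    using sum_mono2[of "{..2*m+1}" "{m, m+1}" "\<lambda>k. (2*m+1) choose k"] by simp
  also have "\<dots> = 2 ^ (2*m+1)" by (rule choose_row_sum)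
  also have "(2*m+1 choose (m+1)) = (2*m+1 choose m)"
    using binomial_symmetric[of m "2*m+1"] by simp
  finally show ?thesis by (simp add: power_mult power_add)
qed

lemma prime_dvd_odd_central_binomial:
  assumes "prime p" "m + 1 < p" "p \<le> 2*m+1"
  shows "p dvd (2*m+1 choose m)"
proof -
  have "fact m * fact (m+1) * (2*m+1 choose m) = (fact (2*m+1) :: nat)"
    using binomial_fact_lemma[of m "2*m+1"] by (simp add: mult_2)
  moreover have "p dvd fact (2*m+1)"
    using assms prime_dvd_fact_iff by blast
  moreover have "\<not> p dvd fact m * fact (m+1)"
    using assms by (simp only: prime_dvd_mult_iff prime_dvd_fact_iff) linarith
  ultimately show ?thesis
    using assms(1) by (metis prime_dvd_mult_iff)
qed

lemma prod_primes_between_le_four_pow: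
  "(\<Prod>p | prime p \<and> m + 1 < p \<and> p \<le> 2*m+1. p) \<le> 4 ^ m"
proof -
  define Q where "Q = {p. prime p \<and> m + 1 < p \<and> p \<le> 2*m+1}"
  have "(\<Prod>p\<in>Q. p ^ 1) dvd (2*m+1 choose m)"
    using prime_dvd_odd_central_binomial by (intro prod_prime_powers_dvd) (auto simp: Q_def)
  then have "(\<Prod>p\<in>Q. p) \<le> (2*m+1 choose m)"
    by (intro dvd_imp_le) (simp_all add: zero_less_binomial_iff)
  also have "\<dots> \<le> 4 ^ m"
    by (rule odd_central_binomial_le)
  finally show ?thesis by (simp add: Q_def)
qed

lemma prod_primes_le_four_pow: "(\<Prod>p | prime p \<and> p \<le> n. p) \<le> 4 ^ n"
proof (induction n rule: less_induct)
  case (less n)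
  consider "n < 2" | "n = 2" | "n > 2" "even n" | m where "n = 2*m+1" "m \<ge> 1"
  proof (cases "n > 2 \<and> odd n")
    case True
    then obtain m where "n = 2*m+1" by (auto elim: oddE)
    with True that(4) show ?thesis by simp
  next
    case False
    then have "n < 2 \<or> n = 2 \<or> (n > 2 \<and> even n)" by auto
    with that(1-3) show ?thesis by blast
  qed
  then show ?case
  proof cases
    case 1
    then have "{p. prime p \<and> p \<le> n} = {}" by (auto dest: prime_ge_2_nat)
    then show ?thesis by (simp only:) simp
  next
    case 2
    then have "{p. prime p \<and> p \<le> n} = {2}" by (auto dest: prime_ge_2_nat)
    then show ?thesis using 2 by (simp only:) simp
  next
    case 3
    then have "\<not> prime n" using prime_odd_nat by fastforce
    then have "{p. prime p \<and> p \<le> n} = {p. prime p \<and> p \<le> n - 1}" by (auto simp: le_eq_less_or_eq)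
    then have "(\<Prod>p | prime p \<and> p \<le> n. p) \<le> 4 ^ (n - 1)"
      using less[of "n - 1"] 3 by (simp only:)
    also have "\<dots> \<le> 4 ^ n" by (rule power_increasing) auto
    finally show ?thesis .
  next
    case 4
    have "{p. prime p \<and> p \<le> n} =
        {p. prime p \<and> p \<le> m + 1} \<union> {p. prime p \<and> m + 1 < p \<and> p \<le> 2*m+1}"
      unfolding 4 by auto
    then have "(\<Prod>p | prime p \<and> p \<le> n. p)
        = (\<Prod>p | prime p \<and> p \<le> m + 1. p) * (\<Prod>p | prime p \<and> m + 1 < p \<and> p \<le> 2*m+1. p)"
      by (simp add: prod.union_disjoint[symmetric] disjoint_iff)
    also have "\<dots> \<le> 4 ^ (m + 1) * 4 ^ m"
      using less[of "m + 1"] 4 prod_primes_between_le_four_pow[of m] by (intro mult_le_mono) auto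
    also have "\<dots> = 4 ^ n"
      unfolding 4 by (simp flip: power_add)
    finally show ?thesis .
  qed
qed

lemma sum_ln_primes_le: "(\<Sum>p | prime p \<and> p \<le> n. ln (real p)) \<le> real n * ln 4"
proof -
  have "(\<Sum>p | prime p \<and> p \<le> n. ln (real p)) = ln (\<Prod>p | prime p \<and> p \<le> n. real p)"
    by (subst ln_prod) (auto dest: prime_gt_0_nat)
  also have "\<dots> \<le> ln (4 ^ n)"
    using prod_primes_le_four_pow[of n]
    by (subst ln_le_cancel_iff) (auto intro!: prod_pos dest: prime_gt_0_nat simp flip: of_nat_prod)
  finally show ?thesis by (simp add: ln_realpow)
qed

lemma power_div_dvd_fact: "p ^ (n div p) dvd fact n"
proof (induction n)
  case (Suc n)
  show ?case
  proof (cases "p dvd Suc n")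
    case True
    then have "p ^ (Suc n div p) = p ^ (n div p) * p"
      by (simp add: div_Suc dvd_eq_mod_eq_0)
    moreover have "p ^ (n div p) * p dvd fact n * Suc n"
      using Suc.IH True by (rule mult_dvd_mono)
    ultimately show ?thesis
      by (simp only: fact_Suc of_nat_id mult.commute)
  next
    case False
    then have "Suc n div p = n div p"
      by (simp add: div_Suc dvd_eq_mod_eq_0)
    moreover have "fact n dvd (fact (Suc n) :: nat)"
      by (rule fact_dvd) simp
    ultimately show ?thesis
      using Suc.IH by (metis dvd_trans)
  qed
qed simp

lemma sum_div_mult_ln_primes_le_ln_fact:
  "(\<Sum>p | prime p \<and> p \<le> n. real (n div p) * ln (real p)) \<le> ln (fact n)"
proof -
  let ?P = "{p. prime p \<and> p \<le> n}"
  have pos: "\<And>p. p \<in> ?P \<Longrightarrow> 0 < p" by (auto dest: prime_gt_0_nat)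
  have "(\<Prod>p\<in>?P. p ^ (n div p)) dvd fact n"
    by (rule prod_prime_powers_dvd) (auto intro: power_div_dvd_fact)
  then have "real (\<Prod>p\<in>?P. p ^ (n div p)) \<le> fact n"
    by (metis dvd_imp_le fact_gt_zero of_nat_fact of_nat_le_iff)
  moreover have "(\<Sum>p\<in>?P. real (n div p) * ln (real p)) = ln (\<Prod>p\<in>?P. real p ^ (n div p))"
    using pos by (subst ln_prod) (auto simp: ln_realpow)
  moreover have "0 < (\<Prod>p\<in>?P. real p ^ (n div p))"
    using pos by (intro prod_pos) auto
  ultimately show ?thesis
    by simp
qed

lemma ln_fact_le: "1 \<le> n \<Longrightarrow> ln (fact n) \<le> real n * ln n - n + 1 + ln n"
proof (induction n rule: dec_induct)
  case (step n)
  have n: "real n \<ge> 1" using step by simp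
  have "ln (real n / (real n + 1)) \<le> real n / (real n + 1) - 1"
    using n by (intro ln_le_minus_one) auto
  then have "1 + ln n * (real n + 1) \<le> (real n + 1) * ln (real n + 1)"
    using n by (simp add: ln_div field_simps)
  moreover have "ln (fact (Suc n)) = ln (fact n) + ln (real n + 1)"
    by (simp add: ln_mult add.commute)
  ultimately show ?case
    using step.IH by (simp add: algebra_simps)
qed simp

definition mertens_sum :: "nat \<Rightarrow> real" where
  "mertens_sum n = (\<Sum>p | prime p \<and> p \<le> n. ln (real p) / real p)"

lemma mertens_sum_le:
  assumes "1 \<le> n"
  shows "mertens_sum n \<le> ln n - 1 + ln 4 + (1 + ln n) / n"
proof -
  let ?P = "{p. prime p \<and> p \<le> n}"
  have n: "real n \<ge> 1" using assms by simp
  have "real n * mertens_sum n = (\<Sum>p\<in>?P. (real n / real p) * ln (real p))"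
    unfolding mertens_sum_def by (simp add: sum_distrib_left)
  also have "\<dots> \<le> (\<Sum>p\<in>?P. (real (n div p) + 1) * ln (real p))"
  proof (intro sum_mono mult_right_mono)
    fix p assume "p \<in> ?P"
    then have p: "0 < p" by (auto dest: prime_gt_0_nat)
    have "n < p + p * (n div p)"
      using p by (rule dividend_less_times_div)
    then have "real n < real p * (real (n div p) + 1)"
      by (simp add: algebra_simps flip: of_nat_mult of_nat_add)
    then show "real n / real p \<le> real (n div p) + 1"
      using p by (simp add: field_simps)
    show "0 \<le> ln (real p)" using p by simp
  qed
  also have "\<dots> = (\<Sum>p\<in>?P. real (n div p) * ln (real p)) + (\<Sum>p\<in>?P. ln (real p))"
    by (simp add: algebra_simps sum.distrib)
  also have "\<dots> \<le> (real n * ln n - n + 1 + ln n) + real n * ln 4"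
    using sum_div_mult_ln_primes_le_ln_fact[of n] ln_fact_le[OF assms] sum_ln_primes_le[of n] by simp
  finally show ?thesis
    using n by (simp add: field_simps)
qed

lemma mertens_sum_Suc:
  "mertens_sum (Suc n) = mertens_sum n + (if prime (Suc n) then ln (Suc n) / Suc n else 0)"
proof -
  have "{p. prime p \<and> p \<le> Suc n} = {p. prime p \<and> p \<le> n} \<union> (if prime (Suc n) then {Suc n} else {})"
    by (auto simp: le_Suc_eq)
  then show ?thesis
    unfolding mertens_sum_def by (cases "prime (Suc n)") simp_all
qed

lemma one_plus_ln_divide_antimono:
  fixes x y :: real
  assumes "1 \<le> x" "x \<le> y"
  shows "(1 + ln y) / y \<le> (1 + ln x) / x"
proof -
  have "ln (y / x) \<le> y / x - 1"
    using assms by (intro ln_le_minus_one) auto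
  then have "x * ln y \<le> x * ln x + y - x"
    using assms by (simp add: ln_div field_simps)
  moreover have "x * ln x \<le> y * ln x"
    using assms by (intro mult_right_mono) auto
  ultimately show ?thesis
    using assms by (simp add: field_simps)
qed

lemma mertens_potential_mono:
  fixes a b m c :: real
  assumes "0 < a" "a < b" "m \<le> a + c"
  shows "(m - a - c) / a\<^sup>2 - 1 / a \<le> (m - b - c) / b\<^sup>2 - 1 / b"
proof -
  define u where "u = a + c - m"
  have u: "0 \<le> u" using assms by (simp add: u_def)
  have "u / b\<^sup>2 \<le> u / a\<^sup>2"
    using assms u by (intro divide_left_mono power_mono) auto
  moreover have "a * (2*b - a) \<le> b\<^sup>2"
    using zero_le_power2[of "b - a"] by (simp add: power2_eq_square algebra_simps)
  then have "(b - a) / b\<^sup>2 + 1 / b \<le> 1 / a"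
    using assms by (simp add: field_simps power2_eq_square)
  ultimately have "(u + (b - a)) / b\<^sup>2 + 1 / b \<le> u / a\<^sup>2 + 1 / a"
    by (simp add: add_divide_distrib)
  then show ?thesis
    unfolding u_def by (simp add: diff_divide_distrib add_divide_distrib algebra_simps)
qed

lemma sum_inverse_mult_ln_primes_tail_le:
  fixes N :: nat and c :: real
  assumes N: "2 \<le> N" and mertens: "\<And>n. N \<le> n \<Longrightarrow> mertens_sum n \<le> ln n + c"
  shows "(\<Sum>p | prime p \<and> N < p \<and> p \<le> M. 1 / (real p * ln (real p)))
           \<le> 2 / ln N + (c - mertens_sum N) / (ln N)\<^sup>2"
proof -
  \<comment> \<open>partial summation: each step M \<rightarrow> M + 1 increases the sum by at most the increase of \<Phi>\<close>
  define \<Phi> where "\<Phi> n = (mertens_sum n - ln n - c) / (ln n)\<^sup>2 - 1 / ln n" for n :: nat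
  define A where "A M = (\<Sum>p | prime p \<and> N < p \<and> p \<le> M. 1 / (real p * ln (real p)))" for M
  have \<Phi>_nonpos: "\<Phi> n \<le> 0" if "N \<le> n" for n
  proof -
    have "0 < ln (real n)" using that N by simp
    then have "(mertens_sum n - ln n - c) / (ln n)\<^sup>2 \<le> 0" "0 \<le> 1 / ln n"
      using mertens[OF that] by (simp_all add: divide_nonpos_pos)
    then show ?thesis unfolding \<Phi>_def by linarith
  qed
  have A_le: "A M \<le> \<Phi> M - \<Phi> N" if "N \<le> M" for M
    using that
  proof (induction M rule: dec_induct)
    case base
    have "A N = 0" by (auto simp: A_def intro!: sum.neutral)
    then show ?case by simp
  next
    case (step M)
    define \<delta> where "\<delta> = (if prime (Suc M) then ln (Suc M) / Suc M else 0)"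
    have "{p. prime p \<and> N < p \<and> p \<le> Suc M} =
        {p. prime p \<and> N < p \<and> p \<le> M} \<union> (if prime (Suc M) then {Suc M} else {})"
      using step.hyps by (auto simp: le_Suc_eq)
    then have "A (Suc M) = A M + \<delta> / (ln (Suc M))\<^sup>2"
      unfolding A_def \<delta>_def by (cases "prime (Suc M)") (simp_all add: power2_eq_square)
    moreover have "mertens_sum (Suc M) = mertens_sum M + \<delta>"
      unfolding \<delta>_def by (rule mertens_sum_Suc)
    moreover have "\<Phi> M \<le> (mertens_sum M - ln (Suc M) - c) / (ln (Suc M))\<^sup>2 - 1 / ln (Suc M)"
      unfolding \<Phi>_def using step N mertens[of M] by (intro mertens_potential_mono) auto
    ultimately show ?case
      using step.IH by (simp add: \<Phi>_def diff_divide_distrib add_divide_distrib)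
  qed
  have "A M \<le> - \<Phi> N"
  proof (cases "N \<le> M")
    case True
    then show ?thesis using A_le \<Phi>_nonpos by fastforce
  next
    case False
    then have "A M = 0" by (auto simp: A_def intro!: sum.neutral)
    then show ?thesis using \<Phi>_nonpos[of N] by simp
  qed
  also have "- \<Phi> N = 2 / ln N + (c - mertens_sum N) / (ln N)\<^sup>2"
    using N by (simp add: \<Phi>_def field_simps power2_eq_square)
  finally show ?thesis by (simp add: A_def)
qed


section \<open>Certified lower bounds for logarithms of small primes\<close>

lemma ln_ge_artanh_partial_sum:
  fixes x y :: real
  assumes "1 \<le> x" "y = (x - 1) / (x + 1)"
  shows "2 * y + 2/3 * y ^ 3 + 2/5 * y ^ 5 \<le> ln x"
proof (cases "x = 1")
  case False
  then have "1 < x" using assms by simp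
  have "(\<Sum>k<3. 2 * y ^ (2*k+1) / of_nat (2*k+1)) \<le> ln x"
    using ln_approx_bounds[OF \<open>1 < x\<close>, where n = 3] unfolding assms(2) by simp
  moreover have "(\<Sum>k<3. 2 * y ^ (2*k+1) / of_nat (2*k+1)) = 2 * y + 2/3 * y ^ 3 + 2/5 * y ^ 5"
    by (simp add: eval_nat_numeral)
  ultimately show ?thesis by simp
qed (use assms in simp)

lemma ln_2_ge: "0.693 \<le> ln (2::real)"
  using ln_ge_artanh_partial_sum[of 2 "1/3"] by (simp add: power_divide)

definition ln_scale :: int where
  "ln_scale = 10 ^ 9"

(* The terms 2 (y + y^3/3 + y^5/5) of ln (q / p), y = (q - p) / (q + p), over the common
   denominator 15 (q + p)^5, scaled by ln_scale and rounded down. *)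
definition ln_quotient_lower :: "nat \<Rightarrow> nat \<Rightarrow> int" where
  "ln_quotient_lower p q =
     (let a = int q - int p; b = int q + int p
      in (2 * ln_scale * a * (15 * b ^ 4 + 5 * a\<^sup>2 * b\<^sup>2 + 3 * a ^ 4)) div (15 * b ^ 5))"

lemma ln_quotient_lower_le:
  assumes "0 < p" "p < q"
  shows "real_of_int (ln_quotient_lower p q) \<le> ln_scale * ln (real q / real p)"
proof -
  define a where "a = real q - real p"
  define b where "b = real q + real p"
  have b: "0 < b" using assms by (simp add: b_def)
  have "real q / real p - 1 = a / real p" "real q / real p + 1 = b / real p"
    using assms by (simp_all add: a_def b_def field_simps)
  then have y: "(real q / real p - 1) / (real q / real p + 1) = a / b"
    using assms by simp
  define A B where "A = int q - int p" and "B = int q + int p"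
  have AB: "real_of_int A = a" "real_of_int B = b"
    by (simp_all add: A_def B_def a_def b_def)
  have "real_of_int (ln_quotient_lower p q)
      \<le> real_of_int (2 * ln_scale * A * (15 * B ^ 4 + 5 * A\<^sup>2 * B\<^sup>2 + 3 * A ^ 4)) / real_of_int (15 * B ^ 5)"
    unfolding ln_quotient_lower_def Let_def A_def B_def by (rule real_of_int_div4)
  also have "\<dots> = ln_scale * (2 * (a / b) + 2/3 * (a / b) ^ 3 + 2/5 * (a / b) ^ 5)"
    using b by (simp add: AB field_simps power2_eq_square eval_nat_numeral)
  also have "\<dots> \<le> ln_scale * ln (real q / real p)"
    using ln_ge_artanh_partial_sum[of "real q / real p" "a / b"] assms
    by (intro mult_left_mono) (auto simp: y ln_scale_def)
  finally show ?thesis .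
qed

fun ln_lower_chain :: "int \<Rightarrow> nat \<Rightarrow> nat list \<Rightarrow> (nat \<times> int) list" where
  "ln_lower_chain l p [] = []"
| "ln_lower_chain l p (q # qs) =
     (let l' = l + ln_quotient_lower p q in (q, l') # ln_lower_chain l' q qs)"

lemma map_fst_ln_lower_chain: "map fst (ln_lower_chain l p qs) = qs"
  by (induction qs arbitrary: l p) (simp_all add: Let_def)

lemma ln_lower_chain_le:
  assumes "sorted_wrt (<) (p # qs)" "0 < p" "real_of_int l \<le> ln_scale * ln p"
    "(q, l') \<in> set (ln_lower_chain l p qs)"
  shows "real_of_int l' \<le> ln_scale * ln q"
  using assms
proof (induction qs arbitrary: l p)
  case (Cons r qs)
  have "p < r" using Cons.prems(1) by simp
  then have "ln (real r) = ln p + ln (real r / real p)"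
    using Cons.prems(2) by (simp add: ln_div)
  then have "real_of_int (l + ln_quotient_lower p r) \<le> ln_scale * ln r"
    using Cons.prems(2,3) ln_quotient_lower_le[OF Cons.prems(2) \<open>p < r\<close>]
    by (simp add: distrib_left)
  then show ?case
    using Cons.prems(1,2,4) \<open>p < r\<close> Cons.IH[of r "l + ln_quotient_lower p r"] by (auto simp: Let_def)
qed simp

lemma ln_lower_chain_primes_upto:
  assumes "(p, l) \<in> set (ln_lower_chain 0 1 (primes_upto n))"
  shows "prime p" "real_of_int l \<le> ln_scale * ln p"
proof -
  have "p \<in> fst ` set (ln_lower_chain 0 1 (primes_upto n))"
    using assms by (rule rev_image_eqI) simp
  then have "p \<in> set (primes_upto n)"
    by (metis map_fst_ln_lower_chain set_map)
  then show "prime p" by (simp add: set_primes_upto)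
  have sorted: "sorted_wrt (<) (1 # primes_upto n)"
    by (auto simp: strict_sorted_iff set_primes_upto dest: prime_gt_1_nat)
  show "real_of_int l \<le> ln_scale * ln p"
    by (rule ln_lower_chain_le[OF sorted _ _ assms]) simp_all
qed

lemma sum_primes_upto_eq_sum_list_ln_lower_chain:
  "(\<Sum>p | prime p \<and> p \<le> n. f p) = (\<Sum>(p, l)\<leftarrow>ln_lower_chain 0 1 (primes_upto n). f p)"
proof -
  have "(\<Sum>p | prime p \<and> p \<le> n. f p) = (\<Sum>p\<leftarrow>primes_upto n. f p)"
    by (simp add: sum_list_distinct_conv_sum_set set_primes_upto conj_commute)
  also have "\<dots> = (\<Sum>p\<leftarrow>map fst (ln_lower_chain 0 1 (primes_upto n)). f p)"
    by (simp only: map_fst_ln_lower_chain)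
  also have "\<dots> = (\<Sum>(p, l)\<leftarrow>ln_lower_chain 0 1 (primes_upto n). f p)"
    by (simp add: case_prod_unfold o_def)
  finally show ?thesis .
qed

lemma ln_lower_chain_primes_upto_256:
  "let c = ln_lower_chain 0 1 (primes_upto 256) in
     list_all (\<lambda>(p, l). 0 < l) c \<and>
     (\<Sum>(p, l)\<leftarrow>c. ln_scale\<^sup>2 div (int p * l) + 1) \<le> 1458 * 10 ^ 6 \<and>
     428 * 10 ^ 7 \<le> (\<Sum>(p, l)\<leftarrow>c. l div int p)"
  by code_simp

lemma sum_inverse_mult_ln_primes_upto_256:
  "(\<Sum>p | prime p \<and> p \<le> 256. 1 / (real p * ln (real p))) \<le> 1.458"
proof -
  define c where "c = ln_lower_chain 0 1 (primes_upto 256)"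
  have "1 / (real p * ln p) \<le> real_of_int (ln_scale\<^sup>2 div (int p * l) + 1) / ln_scale"
    if "(p, l) \<in> set c" for p l
  proof -
    have "0 < l" "prime p" "real_of_int l \<le> ln_scale * ln p"
      using that ln_lower_chain_primes_upto_256 ln_lower_chain_primes_upto[of p l 256]
      by (auto simp: c_def Let_def list_all_iff)
    then have "1 / (real p * ln p) \<le> real_of_int (ln_scale\<^sup>2) / real_of_int (int p * l) / ln_scale"
      by (auto simp: field_simps ln_scale_def power2_eq_square dest: prime_gt_1_nat intro!: mult_left_mono)
    also have "\<dots> \<le> real_of_int (ln_scale\<^sup>2 div (int p * l) + 1) / ln_scale"
      using real_of_int_div3[of "ln_scale\<^sup>2" "int p * l"]
      by (intro divide_right_mono) (auto simp: ln_scale_def)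
    finally show ?thesis .
  qed
  then have "(\<Sum>p | prime p \<and> p \<le> 256. 1 / (real p * ln (real p)))
      \<le> (\<Sum>(p, l)\<leftarrow>c. real_of_int (ln_scale\<^sup>2 div (int p * l) + 1) / ln_scale)"
    unfolding sum_primes_upto_eq_sum_list_ln_lower_chain c_def[symmetric]
    by (intro sum_list_mono) auto
  also have "\<dots> = real_of_int (\<Sum>(p, l)\<leftarrow>c. ln_scale\<^sup>2 div (int p * l) + 1) / ln_scale"
    by (simp add: divide_inverse sum_list_mult_const case_prod_unfold o_def flip: sum_list_of_int)
  also have "\<dots> \<le> 1.458"
    using ln_lower_chain_primes_upto_256 by (simp add: c_def Let_def ln_scale_def)
  finally show ?thesis .
qed

lemma mertens_sum_256_ge: "4.28 \<le> mertens_sum 256"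
proof -
  define c where "c = ln_lower_chain 0 1 (primes_upto 256)"
  have "4.28 \<le> real_of_int (\<Sum>(p, l)\<leftarrow>c. l div int p) / ln_scale"
    using ln_lower_chain_primes_upto_256 by (simp add: c_def Let_def ln_scale_def)
  also have "\<dots> = (\<Sum>(p, l)\<leftarrow>c. real_of_int (l div int p) / ln_scale)"
    by (simp add: divide_inverse sum_list_mult_const case_prod_unfold o_def flip: sum_list_of_int)
  also have "\<dots> \<le> (\<Sum>(p, l)\<leftarrow>c. ln (real p) / real p)"
  proof (intro sum_list_mono, clarify)
    fix p l assume "(p, l) \<in> set c"
    then have "prime p" "real_of_int l \<le> ln_scale * ln p"
      using ln_lower_chain_primes_upto[of p l 256] by (auto simp: c_def)
    then have "real_of_int l / real p / ln_scale \<le> ln (real p) / real p"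
      by (auto simp: field_simps ln_scale_def dest: prime_gt_0_nat)
    moreover have "real_of_int (l div int p) \<le> real_of_int l / real p"
      using real_of_int_div4[of l "int p"] by simp
    ultimately show "real_of_int (l div int p) / ln_scale \<le> ln (real p) / real p"
      by (smt (verit) divide_right_mono ln_scale_def of_int_pos zero_less_power)
  qed
  also have "\<dots> = mertens_sum 256"
    by (simp add: mertens_sum_def c_def sum_primes_upto_eq_sum_list_ln_lower_chain)
  finally show ?thesis .
qed


section \<open>The constant kappa\<close>

lemma nonneg_summable_on_infsum_le:
  fixes f :: "'a \<Rightarrow> real"
  assumes nonneg: "\<And>x. x \<in> A \<Longrightarrow> 0 \<le> f x"
    and bound: "\<And>F. finite F \<Longrightarrow> F \<subseteq> A \<Longrightarrow> sum f F \<le> B"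
  shows "f summable_on A" "infsum f A \<le> B"
proof -
  show "f summable_on A"
  proof (rule nonneg_bdd_above_summable_on[OF nonneg])
    show "bdd_above (sum f ` {F. F \<subseteq> A \<and> finite F})"
      by (rule bdd_aboveI[where M = B]) (use bound in auto)
  qed
  then show "infsum f A \<le> B"
    using bound by (rule infsum_le_finite_sums)
qed

(* The cutoff 256 = 2^8 makes ln 256 = 8 ln 2; the tail bound exceeds the true tail by about
   1.7 / (ln 256)^2, which the margin between ln 5.5 and sum_p 1 / (p ln p) = 1.6366... allows. *)
lemma sum_inverse_mult_ln_primes_beyond_256_le:
  "(\<Sum>p | prime p \<and> 256 < p \<and> p \<le> M. 1 / (real p * ln (real p))) \<le> 0.236"
proof -
  define c :: real where "c = ln 4 - 1 + (1 + ln 256) / 256"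
  define L where "L = ln (2::real)"
  have L: "0.693 \<le> L" "L \<le> 25/36"
    using ln_2_ge ln2_le_25_over_36 by (simp_all add: L_def)
  have ln_256: "ln (256::real) = 8 * L"
    using ln_realpow[of 2 8] by (simp add: L_def)
  have "ln (4::real) = 2 * L"
    using ln_realpow[of 2 2] by (simp add: L_def)
  then have c: "c - mertens_sum 256 \<le> - 3.86"
    using L mertens_sum_256_ge unfolding c_def ln_256 by (simp add: field_simps)
  have mertens: "mertens_sum n \<le> ln n + c" if "256 \<le> n" for n
  proof -
    have "(1 + ln n) / n \<le> (1 + ln 256) / 256"
      using that by (intro one_plus_ln_divide_antimono) auto
    then show ?thesis
      using mertens_sum_le[of n] that unfolding c_def by linarith
  qed
  have l: "5.544 \<le> ln (256::real)" "ln (256::real) \<le> 5.5556"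
    unfolding ln_256 using L by simp_all
  have "(\<Sum>p | prime p \<and> 256 < p \<and> p \<le> M. 1 / (real p * ln (real p)))
      \<le> 2 / ln 256 + (c - mertens_sum 256) / (ln 256)\<^sup>2"
    using sum_inverse_mult_ln_primes_tail_le[of 256 c M, OF _ mertens] by simp
  also have "\<dots> \<le> 2 / 5.544 + - (3.86 / 5.5556\<^sup>2)"
  proof (rule add_mono)
    show "2 / ln 256 \<le> 2 / (5.544::real)"
      using l by (intro divide_left_mono) auto
    have "3.86 / 5.5556\<^sup>2 \<le> 3.86 / (ln (256::real))\<^sup>2"
      using l by (intro divide_left_mono power_mono mult_pos_pos) auto
    moreover have "(c - mertens_sum 256) / (ln 256)\<^sup>2 \<le> - (3.86 / (ln 256)\<^sup>2)"
      using c by (subst minus_divide_left) (intro divide_right_mono, auto)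
    ultimately show "(c - mertens_sum 256) / (ln 256)\<^sup>2 \<le> - (3.86 / 5.5556\<^sup>2)"
      by linarith
  qed
  also have "\<dots> \<le> 0.236"
    by (simp add: power2_eq_square)
  finally show ?thesis .
qed

lemma sum_inverse_mult_ln_primes_le:
  assumes "finite P" "\<And>p. p \<in> P \<Longrightarrow> prime p"
  shows "(\<Sum>p\<in>P. 1 / (real p * ln (real p))) \<le> 1.7"
proof -
  define M where "M = max 256 (Max (insert 0 P))"
  have "P \<subseteq> {p. prime p \<and> p \<le> 256} \<union> {p. prime p \<and> 256 < p \<and> p \<le> M}"
    using assms by (auto simp: M_def le_max_iff_disj intro: Max_ge)
  then have "(\<Sum>p\<in>P. 1 / (real p * ln (real p)))
      \<le> (\<Sum>p | prime p \<and> p \<le> 256. 1 / (real p * ln (real p)))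
        + (\<Sum>p | prime p \<and> 256 < p \<and> p \<le> M. 1 / (real p * ln (real p)))"
    by (subst sum.union_disjoint[symmetric])
      (auto intro!: sum_mono2 dest: prime_gt_1_nat)
  also have "\<dots> \<le> 1.458 + 0.236"
    using sum_inverse_mult_ln_primes_upto_256 sum_inverse_mult_ln_primes_beyond_256_le
    by (rule add_mono)
  finally show ?thesis by simp
qed

lemma ln_5_5_ge: "1.7 \<le> ln (5.5::real)"
proof -
  have "ln (5.5::real) = ln 4 + ln (11/8)"
    using ln_mult[of 4 "11/8"] by simp
  moreover have "ln (4::real) = 2 * ln 2"
    using ln_realpow[of 2 2] by simp
  moreover have "0.318 \<le> ln (11/8::real)"
    using ln_ge_artanh_partial_sum[of "11/8" "3/19"] by (simp add: power_divide)
  ultimately show ?thesis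
    using ln_2_ge by (simp add: field_simps)
qed

lemma inverse_mult_ln_summable_on_primes:
  "(\<lambda>p. 1 / (real p * ln (real p))) summable_on {p. prime p}"
  and infsum_inverse_mult_ln_primes_le:
  "(\<Sum>\<^sub>\<infinity>p\<in>{p. prime p}. 1 / (real p * ln (real p))) \<le> 1.7"
proof -
  have nonneg: "0 \<le> 1 / (real p * ln (real p))" if "p \<in> {p. prime p}" for p
    using that prime_gt_1_nat[of p] by simp
  have bound: "(\<Sum>p\<in>F. 1 / (real p * ln (real p))) \<le> 1.7" if "finite F" "F \<subseteq> {p. prime p}" for F
    using that by (intro sum_inverse_mult_ln_primes_le) auto
  show "(\<lambda>p. 1 / (real p * ln (real p))) summable_on {p. prime p}"
    by (rule nonneg_summable_on_infsum_le(1)[OF nonneg bound])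
  show "(\<Sum>\<^sub>\<infinity>p\<in>{p. prime p}. 1 / (real p * ln (real p))) \<le> 1.7"
    by (rule nonneg_summable_on_infsum_le(2)[OF nonneg bound])
qed

lemma kappa_le: "kappa \<le> 5.5"
proof -
  have "(\<Sum>\<^sub>\<infinity>p\<in>{p. prime p}. 1 / (real p * ln (real p))) \<le> ln 5.5"
    using infsum_inverse_mult_ln_primes_le ln_5_5_ge by (rule order_trans)
  then have "kappa \<le> exp (ln 5.5)"
    unfolding kappa_def by (rule exp_mono)
  then show ?thesis by simp
qed


section \<open>Rankin's method for alpha-full numbers\<close>

lemma inj_on_restrict_multiplicity:
  fixes F P :: "nat set"
  assumes "\<And>d. d \<in> F \<Longrightarrow> 0 < d" "\<And>d. d \<in> F \<Longrightarrow> prime_factors d \<subseteq> P"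
  shows "inj_on (\<lambda>d. restrict (\<lambda>p. multiplicity p d) P) F"
proof (rule inj_onI)
  fix d1 d2 assume d: "d1 \<in> F" "d2 \<in> F"
    and eq: "restrict (\<lambda>p. multiplicity p d1) P = restrict (\<lambda>p. multiplicity p d2) P"
  show "d1 = d2"
  proof (rule multiplicity_eq_nat)
    show pos: "0 < d1" "0 < d2" using d assms(1) by auto
    fix p :: nat assume "prime p"
    show "multiplicity p d1 = multiplicity p d2"
    proof (cases "p \<in> P")
      case True
      then show ?thesis using fun_cong[OF eq, of p] by simp
    next
      case False
      then have "p \<notin> prime_factors d1" "p \<notin> prime_factors d2"
        using assms(2)[OF d(1)] assms(2)[OF d(2)] by auto
      then have "\<not> p dvd d1" "\<not> p dvd d2"
        using \<open>prime p\<close> pos by (auto simp: in_prime_factors_iff)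
      then show ?thesis by (simp add: not_dvd_imp_multiplicity_0)
    qed
  qed
qed

(* Expanding the product gives one term for every exponent vector h : P -> insert 0 I, and d is
   determined by its exponent vector. *)
lemma sum_prod_multiplicity_le_euler_product:
  fixes g :: "nat \<Rightarrow> nat \<Rightarrow> real"
  assumes F: "finite F" "0 \<notin> F" and P: "finite P" "\<And>p. p \<in> P \<Longrightarrow> prime p"
    and I: "finite I" "0 \<notin> I"
    and FP: "\<And>d. d \<in> F \<Longrightarrow> prime_factors d \<subseteq> P"
    and FI: "\<And>d p. d \<in> F \<Longrightarrow> p \<in> prime_factors d \<Longrightarrow> multiplicity p d \<in> I"
    and g: "\<And>p k. 0 \<le> g p k"
  shows "(\<Sum>d\<in>F. \<Prod>p\<in>prime_factors d. g p (multiplicity p d)) \<le> (\<Prod>p\<in>P. 1 + (\<Sum>k\<in>I. g p k))"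
proof -
  define G where "G p k = (if k = 0 then 1 else g p k)" for p k
  define \<phi> where "\<phi> d = restrict (\<lambda>p. multiplicity p d) P" for d
  have mult_0: "multiplicity p d = 0" if "d \<in> F" "p \<in> P" "p \<notin> prime_factors d" for d p
    using that F P by (intro not_dvd_imp_multiplicity_0) (auto simp: in_prime_factors_iff)
  have "(\<Sum>d\<in>F. \<Prod>p\<in>prime_factors d. g p (multiplicity p d)) = (\<Sum>d\<in>F. \<Prod>p\<in>P. G p (\<phi> d p))"
  proof (intro sum.cong refl prod.mono_neutral_cong_left)
    fix d assume d: "d \<in> F"
    show "prime_factors d \<subseteq> P" by (rule FP[OF d])
    show "\<forall>p\<in>P - prime_factors d. G p (\<phi> d p) = 1"
      using mult_0[OF d] by (simp add: G_def \<phi>_def)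
    show "g p (multiplicity p d) = G p (\<phi> d p)" if "p \<in> prime_factors d" for p
      using that FP[OF d] by (auto simp: G_def \<phi>_def prime_factors_multiplicity)
  qed (use P in auto)
  also have "\<dots> = (\<Sum>h\<in>\<phi> ` F. \<Prod>p\<in>P. G p (h p))"
    unfolding \<phi>_def using F FP
    by (intro sum.reindex[symmetric, unfolded o_def] inj_on_restrict_multiplicity) (auto intro: Nat.gr0I)
  also have "\<dots> \<le> (\<Sum>h\<in>PiE P (\<lambda>_. insert 0 I). \<Prod>p\<in>P. G p (h p))"
  proof (rule sum_mono2)
    show "finite (PiE P (\<lambda>_. insert 0 I))" using P I by (simp add: finite_PiE)
    show "\<phi> ` F \<subseteq> PiE P (\<lambda>_. insert 0 I)"
      using FI mult_0 by (force simp: \<phi>_def)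
    show "0 \<le> (\<Prod>p\<in>P. G p (h p))" for h
      using g by (intro prod_nonneg) (simp add: G_def)
  qed
  also have "\<dots> = (\<Prod>p\<in>P. \<Sum>k\<in>insert 0 I. G p k)"
    using P I by (intro prod_sum_PiE[symmetric]) auto
  also have "\<dots> = (\<Prod>p\<in>P. 1 + (\<Sum>k\<in>I. g p k))"
    using I by (intro prod.cong refl) (auto simp: G_def intro!: sum.cong)
  finally show ?thesis .
qed

lemma alpha_full_multiplicity_ge:
  assumes "alpha_full \<alpha> d" "0 < d" "p \<in> prime_factors d"
  shows "\<alpha> \<le> multiplicity p d"
proof -
  have "prime p" "p dvd d" using assms(3) by (auto simp: in_prime_factors_iff)
  then have "p ^ \<alpha> dvd d" using assms(1) unfolding alpha_full_def by blast
  then show ?thesis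
    using assms(2) \<open>prime p\<close> by (intro multiplicity_geI) (auto dest: not_prime_unit)
qed

lemma multiplicity_le_self:
  assumes "0 < d" "p \<in> prime_factors d"
  shows "multiplicity p d \<le> d"
proof -
  have "2 ^ multiplicity p d \<le> p ^ multiplicity p d"
    using assms(2) by (intro power_mono) (auto dest: in_prime_factors_imp_prime prime_ge_2_nat)
  also have "\<dots> \<le> d"
    using assms(1) multiplicity_dvd[of p d] by (intro dvd_imp_le) auto
  finally show ?thesis
    using less_exp[of "multiplicity p d"] by linarith
qed

lemma power_powr_swap: "0 < x \<Longrightarrow> (x ^ n) powr s = (x powr s) ^ n" for x :: real
  by (simp add: powr_power powr_powr mult.commute flip: powr_realpow)

lemma powr_eq_prod_prime_factors:
  assumes "0 < d"
  shows "real d powr s = (\<Prod>p\<in>prime_factors d. (real p powr s) ^ multiplicity p d)"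
proof -
  have "real d = (\<Prod>p\<in>prime_factors d. real p ^ multiplicity p d)"
    using prime_factorization_nat[OF assms] by (simp flip: of_nat_power of_nat_prod)
  then have "real d powr s = (\<Prod>p\<in>prime_factors d. (real p ^ multiplicity p d) powr s)"
    by (simp add: prod_powr_distrib)
  also have "\<dots> = (\<Prod>p\<in>prime_factors d. (real p powr s) ^ multiplicity p d)"
    by (intro prod.cong refl power_powr_swap) (auto dest: in_prime_factors_imp_prime prime_gt_0_nat)
  finally show ?thesis .
qed

lemma rankin_inverse_le:
  fixes Y d t :: real
  assumes "0 < Y" "Y \<le> d" "0 \<le> t"
  shows "1 / d \<le> Y powr (- t) * d powr (t - 1)"
proof -
  have "d powr (- t) * d powr (t - 1) = d powr (- 1)"
    by (simp flip: powr_add)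
  then have "1 / d = d powr (- t) * d powr (t - 1)"
    using assms by (simp add: powr_minus_divide)
  also have "\<dots> \<le> Y powr (- t) * d powr (t - 1)"
    using assms by (intro mult_right_mono powr_mono2') auto
  finally show ?thesis .
qed

lemma rankin_term_le:
  fixes Y r :: real and q :: "nat \<Rightarrow> real"
  assumes "0 < Y" "Y \<le> real d" "r \<le> 1" "\<And>p. 0 \<le> q p"
  shows "1 / real d * (\<Prod>p\<in>prime_factors d. q p)
    \<le> Y powr (r - 1) * (\<Prod>p\<in>prime_factors d. q p * (real p powr (- r)) ^ multiplicity p d)"
proof -
  have "0 < d" using assms(1,2) by simp
  have "1 / real d \<le> Y powr (r - 1) * real d powr (- r)"
    using rankin_inverse_le[of Y d "1 - r"] assms(1-3) by simp
  also have "real d powr (- r) = (\<Prod>p\<in>prime_factors d. (real p powr (- r)) ^ multiplicity p d)"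
    by (rule powr_eq_prod_prime_factors[OF \<open>0 < d\<close>])
  finally have "1 / real d * (\<Prod>p\<in>prime_factors d. q p)
      \<le> Y powr (r - 1) * (\<Prod>p\<in>prime_factors d. (real p powr (- r)) ^ multiplicity p d)
        * (\<Prod>p\<in>prime_factors d. q p)"
    using assms(4) by (intro mult_right_mono prod_nonneg) auto
  then show ?thesis
    by (simp add: prod.distrib mult_ac)
qed

lemma geometric_sum_le:
  fixes x :: real
  assumes "0 \<le> x" "x < 1"
  shows "(\<Sum>k\<in>{a..b}. x ^ k) \<le> x ^ a / (1 - x)"
proof (cases "a \<le> b")
  case True
  have "(1 - x) * (\<Sum>k\<in>{a..b}. x ^ k) = x ^ a - x ^ Suc b"
    by (rule sum_gp_multiplied[OF True])
  also have "\<dots> \<le> x ^ a" using assms by simp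
  finally show ?thesis using assms by (simp add: field_simps mult.commute)
qed (use assms in simp)

lemma inverse_one_minus_exp_le:
  fixes y :: real
  assumes "0 < y"
  shows "1 / (1 - exp (- y)) \<le> 1 + 1 / y"
proof -
  have "(1 + y) * exp (- y) \<le> 1"
    using exp_ge_add_one_self[of y] by (simp add: exp_minus field_simps)
  then have "1 \<le> (1 + 1 / y) * (1 - exp (- y))"
    using assms by (simp add: field_simps)
  moreover have "exp (- y) < 1" using assms by simp
  ultimately show ?thesis by (simp add: divide_le_eq mult.commute)
qed

lemma sum_powr_multiplicities_le:
  fixes x \<eta> :: real and \<alpha> :: nat
  assumes "1 < x" "1 \<le> \<alpha>" "0 < \<eta>"
  shows "(\<Sum>k\<in>{\<alpha>..K}. (x powr (- ((1 + \<eta>) / \<alpha>))) ^ k) \<le> x powr (- (1 + \<eta>)) * (1 + \<alpha> / ln x)"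
proof -
  define y where "y = x powr (- ((1 + \<eta>) / \<alpha>))"
  have "y \<le> x powr (- (1 / \<alpha>))"
    unfolding y_def using assms by (intro powr_mono) (auto simp: divide_right_mono)
  also have "\<dots> = exp (- (ln x / \<alpha>))"
    using assms by (simp add: powr_def)
  finally have y_le: "y \<le> exp (- (ln x / \<alpha>))" .
  have exp_less: "exp (- (ln x / \<alpha>)) < 1"
    using assms by simp
  have inv_le: "1 / (1 - exp (- (ln x / \<alpha>))) \<le> 1 + \<alpha> / ln x"
    using inverse_one_minus_exp_le[of "ln x / \<alpha>"] assms by simp
  have "0 \<le> y" by (simp add: y_def)
  have "y < 1" using y_le exp_less by linarith
  have "real \<alpha> * (- ((1 + \<eta>) / \<alpha>)) = - (1 + \<eta>)"
    using assms by simp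
  then have "y ^ \<alpha> = x powr (- (1 + \<eta>))"
    unfolding y_def using assms by (simp only: powr_power)
  then have "(\<Sum>k\<in>{\<alpha>..K}. y ^ k) \<le> x powr (- (1 + \<eta>)) * (1 / (1 - y))"
    using geometric_sum_le[of y \<alpha> K] \<open>0 \<le> y\<close> \<open>y < 1\<close> by simp
  also have "\<dots> \<le> x powr (- (1 + \<eta>)) * (1 / (1 - exp (- (ln x / \<alpha>))))"
    using y_le exp_less \<open>y < 1\<close> by (intro mult_left_mono divide_left_mono mult_pos_pos) auto
  also have "\<dots> \<le> x powr (- (1 + \<eta>)) * (1 + \<alpha> / ln x)"
    by (rule mult_left_mono[OF inv_le]) simp
  finally show ?thesis unfolding y_def .
qed

lemma rankin_euler_bound:
  fixes Y \<eta> :: real and \<alpha> :: nat and q :: "nat \<Rightarrow> real" and F :: "nat set"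
  assumes Y: "0 < Y" and \<alpha>: "1 \<le> \<alpha>" and \<eta>: "0 < \<eta>" "1 + \<eta> \<le> \<alpha>"
    and F: "finite F" "\<And>d. d \<in> F \<Longrightarrow> Y \<le> real d \<and> alpha_full \<alpha> d"
    and q: "\<And>p. 0 \<le> q p"
  shows "(\<Sum>d\<in>F. 1 / real d * (\<Prod>p\<in>prime_factors d. q p))
    \<le> Y powr ((1 + \<eta>) / \<alpha> - 1)
      * (\<Prod>p\<in>(\<Union>d\<in>F. prime_factors d). 1 + q p * (real p powr (- (1 + \<eta>)) * (1 + \<alpha> / ln p)))"
proof -
  define r where "r = (1 + \<eta>) / \<alpha>"
  define P where "P = (\<Union>d\<in>F. prime_factors d)"
  define K where "K = Max (insert 0 F)"
  define g where "g p k = q p * (real p powr (- r)) ^ k" for p k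
  have d_pos: "0 < d" if "d \<in> F" for d
    using F(2)[OF that] Y by (auto intro: Nat.gr0I)
  have r: "r \<le> 1"
    using \<eta> \<alpha> by (simp add: r_def field_simps)
  have "(\<Sum>d\<in>F. 1 / real d * (\<Prod>p\<in>prime_factors d. q p))
      \<le> (\<Sum>d\<in>F. Y powr (r - 1) * (\<Prod>p\<in>prime_factors d. g p (multiplicity p d)))"
    unfolding g_def using F(2) Y r q by (intro sum_mono rankin_term_le) auto
  also have "\<dots> = Y powr (r - 1) * (\<Sum>d\<in>F. \<Prod>p\<in>prime_factors d. g p (multiplicity p d))"
    by (simp add: sum_distrib_left)
  also have "\<dots> \<le> Y powr (r - 1) * (\<Prod>p\<in>P. 1 + (\<Sum>k\<in>{\<alpha>..K}. g p k))"
  proof (intro mult_left_mono sum_prod_multiplicity_le_euler_product)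
    show "0 \<notin> F" using d_pos by auto
    show "multiplicity p d \<in> {\<alpha>..K}" if "d \<in> F" "p \<in> prime_factors d" for d p
      using that alpha_full_multiplicity_ge[of \<alpha> d p] multiplicity_le_self[of d p] F d_pos
      by (auto simp: K_def intro: le_trans[OF _ Max_ge])
  qed (use F \<alpha> q in \<open>auto simp: P_def g_def in_prime_factors_iff\<close>)
  also have "\<dots> \<le> Y powr (r - 1) * (\<Prod>p\<in>P. 1 + q p * (real p powr (- (1 + \<eta>)) * (1 + \<alpha> / ln p)))"
  proof (intro mult_left_mono prod_mono conjI)
    fix p assume "p \<in> P"
    then have "prime p" by (auto simp: P_def intro: in_prime_factors_imp_prime)
    then have "1 < real p" using prime_gt_1_nat by simp
    have "(\<Sum>k\<in>{\<alpha>..K}. g p k) = q p * (\<Sum>k\<in>{\<alpha>..K}. (real p powr (- r)) ^ k)"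
      by (simp add: g_def sum_distrib_left)
    also have "\<dots> \<le> q p * (real p powr (- (1 + \<eta>)) * (1 + \<alpha> / ln p))"
      using sum_powr_multiplicities_le[OF \<open>1 < real p\<close> \<alpha> \<eta>(1)] q by (intro mult_left_mono) (simp_all add: r_def)
    finally show "1 + (\<Sum>k\<in>{\<alpha>..K}. g p k) \<le> 1 + q p * (real p powr (- (1 + \<eta>)) * (1 + \<alpha> / ln p))"
      by simp
    show "0 \<le> 1 + (\<Sum>k\<in>{\<alpha>..K}. g p k)"
      using q by (auto simp: g_def intro!: add_nonneg_nonneg sum_nonneg)
  qed simp
  finally show ?thesis by (simp add: r_def P_def)
qed


section \<open>Bounds for the Euler factors\<close>

lemma powr_minus_le_integral_step:
  fixes u \<eta> :: real
  assumes "0 < \<eta>" "1 < u"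
  shows "u powr (- (1 + \<eta>)) \<le> ((u - 1) powr (- \<eta>) - u powr (- \<eta>)) / \<eta>"
proof -
  have "((\<lambda>x. x powr (- \<eta>)) has_real_derivative - \<eta> * x powr (- (1 + \<eta>))) (at x)"
    if "u - 1 \<le> x" for x
  proof -
    have "0 < x" "- \<eta> - 1 = - (1 + \<eta>)" using that assms by simp_all
    then show ?thesis using has_real_derivative_powr[of x "- \<eta>"] by (simp only:)
  qed
  then have "\<exists>z. u - 1 < z \<and> z < u \<and>
      u powr (- \<eta>) - (u - 1) powr (- \<eta>) = (u - (u - 1)) * (- \<eta> * z powr (- (1 + \<eta>)))"
    by (intro MVT2) auto
  then obtain z where z: "u - 1 < z" "z < u"
    and mvt: "u powr (- \<eta>) - (u - 1) powr (- \<eta>) = - \<eta> * z powr (- (1 + \<eta>))"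
    by auto
  have "u powr (- (1 + \<eta>)) \<le> z powr (- (1 + \<eta>))"
    using z assms by (intro powr_mono2') auto
  also have "\<dots> = ((u - 1) powr (- \<eta>) - u powr (- \<eta>)) / \<eta>"
    using mvt assms by (simp add: field_simps)
  finally show ?thesis .
qed

lemma sum_powr_le_one_plus_inverse:
  fixes \<eta> :: real
  assumes "0 < \<eta>"
  shows "(\<Sum>n\<in>{1..M}. real n powr (- (1 + \<eta>))) \<le> 1 + 1 / \<eta>"
proof -
  have partial: "(\<Sum>n\<in>{1..M}. real n powr (- (1 + \<eta>))) \<le> 1 + (1 - real M powr (- \<eta>)) / \<eta>"
    if "1 \<le> M" for M
    using that
  proof (induction M rule: dec_induct)
    case (step M)
    then show ?case
      using powr_minus_le_integral_step[OF assms, of "real (Suc M)"]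
      by (simp add: diff_divide_distrib)
  qed simp
  show ?thesis
  proof (cases "M = 0")
    case False
    then have "(\<Sum>n\<in>{1..M}. real n powr (- (1 + \<eta>))) \<le> 1 + (1 - real M powr (- \<eta>)) / \<eta>"
      by (intro partial) simp
    also have "\<dots> \<le> 1 + 1 / \<eta>"
      using assms by (simp add: divide_right_mono)
    finally show ?thesis .
  qed (use assms in simp)
qed

lemma prod_one_plus_powr_primes_le:
  fixes \<eta> :: real
  assumes P: "finite P" "\<And>p. p \<in> P \<Longrightarrow> prime p" and \<eta>: "0 < \<eta>"
  shows "(\<Prod>p\<in>P. 1 + real p powr (- (1 + \<eta>))) \<le> 1 + 1 / \<eta>"
proof -
  define s where "s = - (1 + \<eta>)"
  have P_pos: "0 < p" if "p \<in> P" for p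
    using P(2)[OF that] by (simp add: prime_gt_0_nat)
  have subset_eq: "A = {p \<in> P. p dvd \<Prod>A}" if "A \<subseteq> P" for A
  proof -
    have "finite A" using that P(1) by (rule finite_subset)
    then show ?thesis
      using that P(2) by (auto simp: prime_dvd_prod_iff) (metis primes_dvd_imp_eq subsetD)
  qed
  have inj: "inj_on (\<lambda>A. \<Prod>A) (Pow P)"
    by (rule inj_onI) (metis PowD subset_eq)
  have "(\<Prod>p\<in>P. 1 + real p powr s) = (\<Prod>p\<in>P. real p powr s + 1)"
    by (simp add: add.commute)
  also have "\<dots> = (\<Sum>A\<in>Pow P. (\<Prod>p\<in>A. real p powr s) * (\<Prod>p\<in>P - A. 1))"
    by (rule prod_add[OF P(1)])
  also have "\<dots> = (\<Sum>A\<in>Pow P. real (\<Prod>A) powr s)"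
    by (simp add: prod_powr_distrib)
  also have "\<dots> = (\<Sum>n\<in>(\<lambda>A. \<Prod>A) ` Pow P. real n powr s)"
    using inj by (simp add: sum.reindex)
  also have "\<dots> \<le> (\<Sum>n\<in>{1..\<Prod>P}. real n powr s)"
  proof (rule sum_mono2)
    show "(\<lambda>A. \<Prod>A) ` Pow P \<subseteq> {1..\<Prod>P}"
    proof clarify
      fix A assume "A \<subseteq> P"
      moreover have "\<Prod>A dvd \<Prod>P" by (rule prod_dvd_prod_subset[OF P(1) \<open>A \<subseteq> P\<close>])
      moreover have "0 < \<Prod>P" using P_pos by (simp add: prod_pos)
      ultimately show "\<Prod>A \<in> {1..\<Prod>P}"
        using P_pos by (auto intro!: prod_pos dvd_imp_le simp: Suc_le_eq)
    qed
  qed auto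
  also have "\<dots> \<le> 1 + 1 / \<eta>"
    unfolding s_def by (rule sum_powr_le_one_plus_inverse[OF \<eta>])
  finally show ?thesis unfolding s_def .
qed

lemma sum_inverse_mult_pred_le_one:
  assumes "finite A" "\<And>n. n \<in> A \<Longrightarrow> 2 \<le> n"
  shows "(\<Sum>n\<in>A. 1 / (real n * (real n - 1))) \<le> 1"
proof -
  define f where "f n = 1 / (real n * (real n - 1))" for n :: nat
  have telescope: "(\<Sum>n\<in>{2..N}. f n) = 1 - 1 / real N" if "1 \<le> N" for N
    using that
  proof (induction N rule: dec_induct)
    case (step N)
    have "(\<Sum>n\<in>{2..Suc N}. f n) = (\<Sum>n\<in>{2..N}. f n) + f (Suc N)"
      using step.hyps by (simp add: atLeastAtMostSuc_conv)
    also have "\<dots> = 1 - 1 / real N + 1 / ((real N + 1) * real N)"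
      using step.IH by (simp add: f_def)
    also have "\<dots> = 1 - 1 / real (Suc N)"
    proof -
      have N: "0 < real N" using step.hyps by simp
      then have "real N + real N * real N \<noteq> 0"
        using mult_pos_pos[OF N N] by linarith
      with N show ?thesis by (simp add: field_simps)
    qed
    finally show ?case .
  qed simp
  define N where "N = Max (insert 2 A)"
  have "(\<Sum>n\<in>A. f n) \<le> (\<Sum>n\<in>{2..N}. f n)"
    using assms by (intro sum_mono2) (auto simp: N_def f_def)
  also have "\<dots> \<le> 1"
  proof -
    have "2 \<le> N" unfolding N_def using assms(1) by (intro Max_ge) auto
    then show ?thesis using telescope[of N] by simp
  qed
  finally show ?thesis by (simp add: f_def)
qed

lemma prod_one_plus_inverse_mult_pred_le_exp_1:
  assumes "finite P" "\<And>p. p \<in> P \<Longrightarrow> prime p"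
  shows "(\<Prod>p\<in>P. 1 + 1 / (real p * (real p - 1))) \<le> exp 1"
proof -
  have ge_2: "2 \<le> p" if "p \<in> P" for p
    using assms(2)[OF that] by (rule prime_ge_2_nat)
  have "(\<Prod>p\<in>P. 1 + 1 / (real p * (real p - 1))) \<le> exp (\<Sum>p\<in>P. 1 / (real p * (real p - 1)))"
    using ge_2 by (intro prod_le_exp_sum) force
  also have "\<dots> \<le> exp 1"
    using sum_inverse_mult_pred_le_one[OF assms(1) ge_2] by simp
  finally show ?thesis .
qed

lemma prod_one_plus_inverse_mult_ln_le_kappa_power:
  assumes "finite P" "\<And>p. p \<in> P \<Longrightarrow> prime p"
  shows "(\<Prod>p\<in>P. 1 + real \<alpha> * (1 / (real p * ln (real p)))) \<le> kappa ^ \<alpha>"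
proof -
  have nonneg: "0 \<le> 1 / (real p * ln (real p))" if "prime p" for p
    using prime_gt_1_nat[OF that] by simp
  have "(\<Prod>p\<in>P. 1 + real \<alpha> * (1 / (real p * ln (real p))))
      \<le> exp (real \<alpha> * (\<Sum>p\<in>P. 1 / (real p * ln (real p))))"
    using assms nonneg by (simp add: prod_le_exp_sum sum_distrib_left)
  also have "\<dots> \<le> exp (real \<alpha> * (\<Sum>\<^sub>\<infinity>p\<in>{p. prime p}. 1 / (real p * ln (real p))))"
    using assms nonneg
    by (auto intro!: mult_left_mono finite_sum_le_infsum inverse_mult_ln_summable_on_primes)
  also have "\<dots> = kappa ^ \<alpha>"
    by (simp add: kappa_def exp_of_nat_mult)
  finally show ?thesis .
qed

lemma one_plus_mult_one_plus_le:
  fixes x c p :: real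
  assumes "0 \<le> x" "0 \<le> c" "0 < p" "x * p \<le> 1 + x"
  shows "1 + x * (1 + c) \<le> (1 + x) * (1 + c / p)"
proof -
  have "x * c * p \<le> (1 + x) * c"
    using mult_right_mono[OF assms(4) assms(2)] by (simp add: mult_ac)
  then have "x * c \<le> (1 + x) * c / p"
    using assms(3) by (simp add: field_simps)
  then show ?thesis
    by (simp add: algebra_simps)
qed

lemma powr_minus_one_minus_mult_self_le:
  fixes x \<eta> :: real
  assumes "1 \<le> x" "0 \<le> \<eta>"
  shows "x powr (- (1 + \<eta>)) * x \<le> 1"
proof -
  have "x powr (- (1 + \<eta>)) * x = x powr (- \<eta>)"
    using assms by (simp add: powr_add[symmetric] powr_diff powr_minus_divide)
  also have "\<dots> \<le> 1"
    using powr_mono[of "- \<eta>" 0 x] assms by simp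
  finally show ?thesis .
qed

lemma rankin_local_factor_le:
  fixes \<eta> :: real and \<alpha> :: nat
  assumes "prime p" "0 \<le> \<eta>"
  defines "a \<equiv> real p powr (- (1 + \<eta>))"
  shows "1 + a * (1 + \<alpha> / ln p) \<le> (1 + a) * (1 + \<alpha> * (1 / (real p * ln p)))"
proof -
  have p: "1 < real p" using prime_gt_1_nat[OF assms(1)] by simp
  have a: "0 \<le> a" "a * p \<le> 1"
    using powr_minus_one_minus_mult_self_le[of p \<eta>] p assms(2) by (auto simp: a_def)
  then have "1 + a * (1 + \<alpha> / ln p) \<le> (1 + a) * (1 + \<alpha> / ln p / p)"
    using p by (intro one_plus_mult_one_plus_le) auto
  then show ?thesis by (simp add: mult.commute)
qed

lemma rankin_local_factor_totient_le:
  fixes \<eta> :: real and \<alpha> :: nat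
  assumes "prime p" "0 \<le> \<eta>"
  defines "a \<equiv> real p powr (- (1 + \<eta>))"
  shows "1 + real p / (real p - 1) * (a * (1 + \<alpha> / ln p))
    \<le> (1 + a) * (1 + 1 / (real p * (real p - 1))) * (1 + \<alpha> * (1 / (real p * ln p)))"
proof -
  define x where "x = real p / (real p - 1) * a"
  have p: "1 < real p" using prime_gt_1_nat[OF assms(1)] by simp
  have a: "0 \<le> a" "a * p \<le> 1"
    using powr_minus_one_minus_mult_self_le[of p \<eta>] p assms(2) by (auto simp: a_def)
  have "x * p = x + a * p"
    using p by (simp add: x_def field_simps)
  then have "x * p \<le> 1 + x"
    using a by linarith
  then have "1 + x * (1 + \<alpha> / ln p) \<le> (1 + x) * (1 + \<alpha> / ln p / p)"
    using a p by (intro one_plus_mult_one_plus_le) (auto simp: x_def)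
  also have "1 + x \<le> (1 + a) * (1 + 1 / (real p * (real p - 1)))"
  proof -
    define m where "m = 1 / (real p * (real p - 1))"
    have "x = a + a / (real p - 1)"
      using p by (simp add: x_def field_simps)
    also have "\<dots> \<le> a + 1 / real p / (real p - 1)"
      using a p by (intro add_left_mono divide_right_mono) (auto simp: field_simps)
    finally have "x \<le> a + m"
      by (simp add: m_def)
    moreover have "0 \<le> a * m"
      using a p by (simp add: m_def)
    ultimately show ?thesis
      unfolding m_def[symmetric] by (simp only: ring_distribs mult_1_left mult_1_right)
  qed
  then have "(1 + x) * (1 + \<alpha> / ln p / p)
      \<le> (1 + a) * (1 + 1 / (real p * (real p - 1))) * (1 + \<alpha> / ln p / p)"
    using p by (intro mult_right_mono) auto
  finally show ?thesis
    by (simp add: x_def mult.commute mult.left_commute)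
qed

lemma inverse_totient_eq:
  assumes "0 < d"
  shows "1 / real (totient d) = 1 / real d * (\<Prod>p\<in>prime_factors d. real p / (real p - 1))"
proof -
  define Q where "Q = (\<Prod>p\<in>prime_factors d. 1 - 1 / real p)"
  have "Q * (\<Prod>p\<in>prime_factors d. real p / (real p - 1))
      = (\<Prod>p\<in>prime_factors d. (1 - 1 / real p) * (real p / (real p - 1)))"
    unfolding Q_def by (rule prod.distrib[symmetric])
  also have "\<dots> = 1"
  proof (rule prod.neutral, rule ballI)
    fix p assume "p \<in> prime_factors d"
    then have "1 < real p"
      using prime_gt_1_nat[OF in_prime_factors_imp_prime] by simp
    then show "(1 - 1 / real p) * (real p / (real p - 1)) = 1" by (simp add: field_simps)
  qed
  finally have "(\<Prod>p\<in>prime_factors d. real p / (real p - 1)) = inverse Q"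
    by (rule inverse_unique[symmetric])
  then show ?thesis
    by (simp add: totient_formula2 Q_def divide_inverse mult.commute)
qed

lemma exp_half_le_2: "exp (1/2 :: real) \<le> 2"
proof -
  have "exp (1/2 :: real) ^ 2 = exp 1"
    by (simp flip: exp_of_nat_mult)
  also have "\<dots> \<le> 2 ^ 2"
    using e_less_272 by simp
  finally show ?thesis
    by (rule power2_le_imp_le) simp
qed

lemma ln_20_ge: "2.77 \<le> ln (20::real)"
proof -
  have "ln (16::real) = 4 * ln 2"
    using ln_realpow[of 2 4] by simp
  moreover have "ln (16::real) \<le> ln 20"
    by simp
  ultimately show ?thesis
    using ln_2_ge by simp
qed

lemma rankin_powr_le:
  fixes Y :: real and \<alpha> :: nat
  assumes "1 < Y" "2 \<le> \<alpha>"
  shows "Y powr ((1 + 1 / ln Y) / \<alpha> - 1) \<le> 2 / Y powr (1 - 1 / \<alpha>)"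
proof -
  have "(1 + 1 / ln Y) / \<alpha> - 1 = 1 / (\<alpha> * ln Y) - (1 - 1 / \<alpha>)"
    using assms by (simp add: field_simps)
  then have "Y powr ((1 + 1 / ln Y) / \<alpha> - 1) = Y powr (1 / (\<alpha> * ln Y)) / Y powr (1 - 1 / \<alpha>)"
    by (simp only: powr_diff)
  also have "Y powr (1 / (\<alpha> * ln Y)) = exp (1 / \<alpha>)"
    using assms by (simp add: powr_def)
  also have "exp (1 / \<alpha>) / Y powr (1 - 1 / \<alpha>) \<le> exp (1 / 2) / Y powr (1 - 1 / \<alpha>)"
    using assms by (intro divide_right_mono) auto
  also have "\<dots> \<le> 2 / Y powr (1 - 1 / \<alpha>)"
    using exp_half_le_2 by (intro divide_right_mono) auto
  finally show ?thesis .
qed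


section \<open>The sums over alpha-full numbers\<close>

lemma euler_factor_nonneg:
  fixes c s :: real and \<alpha> :: nat
  assumes "prime p" "0 \<le> c"
  shows "0 \<le> 1 + c * (real p powr s * (1 + \<alpha> / ln p))"
proof -
  have "0 < ln (real p)"
    using prime_gt_1_nat[OF assms(1)] by simp
  then show ?thesis
    using assms(2) by (intro add_nonneg_nonneg mult_nonneg_nonneg) auto
qed

lemma prod_euler_factors_le:
  fixes \<eta> C :: real and \<alpha> :: nat and q b :: "nat \<Rightarrow> real"
  assumes P: "finite P" "\<And>p. p \<in> P \<Longrightarrow> prime p" and \<eta>: "0 < \<eta>"
    and q: "\<And>p. 0 \<le> q p" and b: "\<And>p. prime p \<Longrightarrow> 0 \<le> b p"
    and local: "\<And>p. prime p \<Longrightarrow> 1 + q p * (real p powr (- (1 + \<eta>)) * (1 + \<alpha> / ln p))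
        \<le> (1 + real p powr (- (1 + \<eta>))) * b p * (1 + \<alpha> * (1 / (real p * ln p)))"
    and C: "(\<Prod>p\<in>P. b p) \<le> C"
  shows "(\<Prod>p\<in>P. 1 + q p * (real p powr (- (1 + \<eta>)) * (1 + \<alpha> / ln p))) \<le> (1 + 1 / \<eta>) * C * kappa ^ \<alpha>"
proof -
  have gt_1: "1 < real p" if "p \<in> P" for p
    using prime_gt_1_nat[OF P(2)[OF that]] by simp
  have b_nonneg: "0 \<le> (\<Prod>p\<in>P. b p)"
    using P b by (intro prod_nonneg) auto
  have "(\<Prod>p\<in>P. 1 + q p * (real p powr (- (1 + \<eta>)) * (1 + \<alpha> / ln p)))
      \<le> (\<Prod>p\<in>P. (1 + real p powr (- (1 + \<eta>))) * b p * (1 + \<alpha> * (1 / (real p * ln p))))"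
    using P q local by (intro prod_mono conjI euler_factor_nonneg) auto
  also have "\<dots> = (\<Prod>p\<in>P. 1 + real p powr (- (1 + \<eta>))) * (\<Prod>p\<in>P. b p)
      * (\<Prod>p\<in>P. 1 + \<alpha> * (1 / (real p * ln p)))"
    by (simp add: prod.distrib)
  also have "\<dots> \<le> (1 + 1 / \<eta>) * C * kappa ^ \<alpha>"
  proof (intro mult_mono)
    show "(\<Prod>p\<in>P. 1 + real p powr (- (1 + \<eta>))) \<le> 1 + 1 / \<eta>"
      by (rule prod_one_plus_powr_primes_le[OF P \<eta>])
    show "(\<Prod>p\<in>P. 1 + \<alpha> * (1 / (real p * ln p))) \<le> kappa ^ \<alpha>"
      by (rule prod_one_plus_inverse_mult_ln_le_kappa_power[OF P])
    show "0 \<le> (1 + 1 / \<eta>) * C"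
      using \<eta> C b_nonneg by simp
    have "0 \<le> 1 + \<alpha> * (1 / (real p * ln p))" if "p \<in> P" for p
      using gt_1[OF that] by simp
    then show "0 \<le> (\<Prod>p\<in>P. 1 + \<alpha> * (1 / (real p * ln p)))"
      by (intro prod_nonneg) auto
  qed (use \<eta> C b_nonneg in simp_all)
  finally show ?thesis .
qed

(* q weighs the prime divisors of d (q = 1 for 1 / d, q p = p / (p - 1) for 1 / phi(d)), and b p is
   the price of that weight in the Euler factor at p. *)
lemma sum_alpha_full_weighted_le:
  fixes Y :: real and \<alpha> :: nat and F :: "nat set" and q b :: "nat \<Rightarrow> real" and C :: real
  assumes Y: "20 \<le> Y" and \<alpha>: "2 \<le> \<alpha>"
    and F: "finite F" "\<And>d. d \<in> F \<Longrightarrow> Y \<le> real d \<and> alpha_full \<alpha> d"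
    and q: "\<And>p. 0 \<le> q p" and b: "\<And>p. prime p \<Longrightarrow> 0 \<le> b p"
    and local: "\<And>p. prime p \<Longrightarrow> 1 + q p * (real p powr (- (1 + 1 / ln Y)) * (1 + \<alpha> / ln p))
        \<le> (1 + real p powr (- (1 + 1 / ln Y))) * b p * (1 + \<alpha> * (1 / (real p * ln p)))"
    and C: "\<And>P. finite P \<Longrightarrow> (\<And>p. p \<in> P \<Longrightarrow> prime p) \<Longrightarrow> (\<Prod>p\<in>P. b p) \<le> C"
  shows "(\<Sum>d\<in>F. 1 / real d * (\<Prod>p\<in>prime_factors d. q p))
    \<le> 2 * (1 + ln Y) * C * kappa ^ \<alpha> / Y powr (1 - 1 / \<alpha>)"
proof -
  define P where "P = (\<Union>d\<in>F. prime_factors d)"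
  have P: "finite P" "\<And>p. p \<in> P \<Longrightarrow> prime p"
    using F(1) by (auto simp: P_def intro: in_prime_factors_imp_prime)
  have "ln 20 \<le> ln Y"
    using Y by simp
  then have L: "2 \<le> ln Y"
    using ln_20_ge by simp
  moreover have "2 \<le> real \<alpha>"
    using \<alpha> by simp
  moreover have "1 / ln Y \<le> 1"
    using L by simp
  ultimately have "1 + 1 / ln Y \<le> real \<alpha>"
    by linarith
  then have "(\<Sum>d\<in>F. 1 / real d * (\<Prod>p\<in>prime_factors d. q p))
      \<le> Y powr ((1 + 1 / ln Y) / \<alpha> - 1)
        * (\<Prod>p\<in>P. 1 + q p * (real p powr (- (1 + 1 / ln Y)) * (1 + \<alpha> / ln p)))"
    unfolding P_def using Y \<alpha> F q L by (intro rankin_euler_bound) auto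
  also have "\<dots> \<le> 2 / Y powr (1 - 1 / \<alpha>) * ((1 + 1 / (1 / ln Y)) * C * kappa ^ \<alpha>)"
  proof (rule mult_mono)
    show "Y powr ((1 + 1 / ln Y) / \<alpha> - 1) \<le> 2 / Y powr (1 - 1 / \<alpha>)"
      using Y \<alpha> by (intro rankin_powr_le) auto
    show "(\<Prod>p\<in>P. 1 + q p * (real p powr (- (1 + 1 / ln Y)) * (1 + \<alpha> / ln p)))
        \<le> (1 + 1 / (1 / ln Y)) * C * kappa ^ \<alpha>"
      using L by (intro prod_euler_factors_le[OF P _ q b local C[OF P]] divide_pos_pos) linarith+
    show "0 \<le> (\<Prod>p\<in>P. 1 + q p * (real p powr (- (1 + 1 / ln Y)) * (1 + \<alpha> / ln p)))"
      using P q by (intro prod_nonneg euler_factor_nonneg) auto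
  qed simp
  also have "\<dots> = 2 * (1 + ln Y) * C * kappa ^ \<alpha> / Y powr (1 - 1 / \<alpha>)"
    by simp
  finally show ?thesis .
qed

lemma sum_inverse_alpha_full_le:
  fixes Y :: real and \<alpha> :: nat and F :: "nat set"
  assumes "20 \<le> Y" "2 \<le> \<alpha>" "finite F" "\<And>d. d \<in> F \<Longrightarrow> Y \<le> real d \<and> alpha_full \<alpha> d"
  shows "(\<Sum>d\<in>F. 1 / real d) \<le> 3 * kappa ^ \<alpha> * ln Y / Y powr (1 - 1 / \<alpha>)"
proof -
  have "(\<Sum>d\<in>F. 1 / real d) = (\<Sum>d\<in>F. 1 / real d * (\<Prod>p\<in>prime_factors d. 1))"
    by simp
  also have "\<dots> \<le> 2 * (1 + ln Y) * 1 * kappa ^ \<alpha> / Y powr (1 - 1 / \<alpha>)"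
  proof (rule sum_alpha_full_weighted_le[where q = "\<lambda>_. 1" and b = "\<lambda>_. 1" and C = 1])
    fix p :: nat assume "prime p"
    have "0 \<le> 1 / ln Y" using assms(1) by simp
    then show "1 + 1 * (real p powr (- (1 + 1 / ln Y)) * (1 + \<alpha> / ln p))
        \<le> (1 + real p powr (- (1 + 1 / ln Y))) * 1 * (1 + \<alpha> * (1 / (real p * ln p)))"
      using rankin_local_factor_le[OF \<open>prime p\<close>, of "1 / ln Y" \<alpha>] by simp
  qed (use assms in auto)
  also have "\<dots> \<le> 3 * kappa ^ \<alpha> * ln Y / Y powr (1 - 1 / \<alpha>)"
  proof (intro divide_right_mono)
    have "ln 20 \<le> ln Y" using assms(1) by simp
    then have "2 * (1 + ln Y) \<le> 3 * ln Y" using ln_20_ge by simp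
    then show "2 * (1 + ln Y) * 1 * kappa ^ \<alpha> \<le> 3 * kappa ^ \<alpha> * ln Y"
      by (simp add: kappa_def mult_right_mono mult.commute mult.left_commute)
  qed simp
  finally show ?thesis .
qed

lemma two_mult_one_plus_mult_exp_1_le:
  fixes L :: real
  assumes "2.77 \<le> L"
  shows "2 * (1 + L) * exp 1 \<le> 13 * L * ln L"
proof -
  have "exp 1 \<le> L"
    using assms e_less_272 by simp
  then have "1 \<le> ln L"
    using assms by (subst ln_ge_iff) auto
  have "2 * (1 + L) * exp 1 \<le> 2 * (1 + L) * 2.72"
    using assms e_less_272 by (intro mult_left_mono) auto
  also have "\<dots> \<le> 13 * L * 1"
    using assms by simp
  also have "\<dots> \<le> 13 * L * ln L"
    using assms \<open>1 \<le> ln L\<close> by (intro mult_left_mono) auto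
  finally show ?thesis .
qed

lemma sum_inverse_totient_alpha_full_le:
  fixes Y :: real and \<alpha> :: nat and F :: "nat set"
  assumes "20 \<le> Y" "2 \<le> \<alpha>" "finite F" "\<And>d. d \<in> F \<Longrightarrow> Y \<le> real d \<and> alpha_full \<alpha> d"
  shows "(\<Sum>d\<in>F. 1 / real (totient d)) \<le> 13 * kappa ^ \<alpha> * ln Y * ln (ln Y) / Y powr (1 - 1 / \<alpha>)"
proof -
  have "(\<Sum>d\<in>F. 1 / real (totient d))
      = (\<Sum>d\<in>F. 1 / real d * (\<Prod>p\<in>prime_factors d. real p / (real p - 1)))"
    using assms(1,4) by (intro sum.cong refl inverse_totient_eq) (force intro: Nat.gr0I)
  also have "\<dots> \<le> 2 * (1 + ln Y) * exp 1 * kappa ^ \<alpha> / Y powr (1 - 1 / \<alpha>)"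
  proof (rule sum_alpha_full_weighted_le[where b = "\<lambda>p. 1 + 1 / (real p * (real p - 1))"])
    fix p :: nat assume "prime p"
    have "0 \<le> 1 / ln Y" using assms(1) by simp
    then show "1 + real p / (real p - 1) * (real p powr (- (1 + 1 / ln Y)) * (1 + \<alpha> / ln p))
        \<le> (1 + real p powr (- (1 + 1 / ln Y))) * (1 + 1 / (real p * (real p - 1)))
          * (1 + \<alpha> * (1 / (real p * ln p)))"
      by (rule rankin_local_factor_totient_le[OF \<open>prime p\<close>])
    show "0 \<le> 1 + 1 / (real p * (real p - 1))"
      using prime_gt_1_nat[OF \<open>prime p\<close>] by simp
  next
    show "0 \<le> real p / (real p - 1)" for p :: nat
      by (cases p) auto
  qed (use assms prod_one_plus_inverse_mult_pred_le_exp_1 in auto)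
  also have "\<dots> \<le> 13 * kappa ^ \<alpha> * ln Y * ln (ln Y) / Y powr (1 - 1 / \<alpha>)"
  proof (intro divide_right_mono)
    have "ln 20 \<le> ln Y" using assms(1) by simp
    then have "2 * (1 + ln Y) * exp 1 \<le> 13 * ln Y * ln (ln Y)"
      using ln_20_ge by (intro two_mult_one_plus_mult_exp_1_le) simp
    then show "2 * (1 + ln Y) * exp 1 * kappa ^ \<alpha> \<le> 13 * kappa ^ \<alpha> * ln Y * ln (ln Y)"
      by (simp add: kappa_def mult_right_mono mult.commute mult.left_commute)
  qed simp
  finally show ?thesis .
qed


lemma alpha_full_reciprocal_sums:
  fixes Y :: real and \<alpha> :: nat
  assumes Y: "Y \<ge> 20" and \<alpha>: "\<alpha> \<ge> 2"
  defines "D \<equiv> {d::nat. real d \<ge> Y \<and> alpha_full \<alpha> d}"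
  shows "(\<lambda>d. 1 / real d) summable_on D"
    and "(\<Sum>\<^sub>\<infinity>d\<in>D. 1 / real d) \<le> 3 * kappa ^ \<alpha> * ln Y / Y powr (1 - 1 / real \<alpha>)"
    and "(\<lambda>d. 1 / real (totient d)) summable_on D"
    and "(\<Sum>\<^sub>\<infinity>d\<in>D. 1 / real (totient d))
      \<le> 13 * kappa ^ \<alpha> * ln Y * ln (ln Y) / Y powr (1 - 1 / real \<alpha>)"
proof -
  have "(\<Sum>d\<in>F. 1 / real d) \<le> 3 * kappa ^ \<alpha> * ln Y / Y powr (1 - 1 / real \<alpha>)"
    if "finite F" "F \<subseteq> D" for F
    using that by (intro sum_inverse_alpha_full_le[OF Y \<alpha>]) (auto simp: D_def)
  from nonneg_summable_on_infsum_le[OF _ this]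
  show "(\<lambda>d. 1 / real d) summable_on D"
    and "(\<Sum>\<^sub>\<infinity>d\<in>D. 1 / real d) \<le> 3 * kappa ^ \<alpha> * ln Y / Y powr (1 - 1 / real \<alpha>)"
    by simp_all
  have "(\<Sum>d\<in>F. 1 / real (totient d)) \<le> 13 * kappa ^ \<alpha> * ln Y * ln (ln Y) / Y powr (1 - 1 / real \<alpha>)"
    if "finite F" "F \<subseteq> D" for F
    using that by (intro sum_inverse_totient_alpha_full_le[OF Y \<alpha>]) (auto simp: D_def)
  from nonneg_summable_on_infsum_le[OF _ this]
  show "(\<lambda>d. 1 / real (totient d)) summable_on D"
    and "(\<Sum>\<^sub>\<infinity>d\<in>D. 1 / real (totient d))
      \<le> 13 * kappa ^ \<alpha> * ln Y * ln (ln Y) / Y powr (1 - 1 / real \<alpha>)"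
    by simp_all
qed

theorem lemma4:
  shows "kappa \<le> 5.5 \<and>
    (\<forall>(Y::real) (\<alpha>::nat). Y \<ge> 20 \<and> \<alpha> \<ge> 2 \<longrightarrow>
      (let D = {d::nat. real d \<ge> Y \<and> alpha_full \<alpha> d} in
        (\<lambda>d. 1 / real d) summable_on D \<and>
        (\<Sum>\<^sub>\<infinity>d\<in>D. 1 / real d) \<le> 3 * kappa ^ \<alpha> * ln Y / Y powr (1 - 1 / real \<alpha>) \<and>
        (\<lambda>d. 1 / real (totient d)) summable_on D \<and>
        (\<Sum>\<^sub>\<infinity>d\<in>D. 1 / real (totient d))
          \<le> 13 * kappa ^ \<alpha> * ln Y * ln (ln Y) / Y powr (1 - 1 / real \<alpha>)))"
  unfolding Let_def using kappa_le alpha_full_reciprocal_sums by blast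

end
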